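(* Let $\bar\rho>0$, $\bar\theta>0$, $R>0$, $c_v>0$, $\nu_0>0$, $k_0>0$ be constants and for $\xi\in\mathbb{R}$ let \[ A(\xi)=\begin{pmatrix}0&\bar\rho i\xi&0\\ \frac{R\bar\theta}{\bar\rho}i\xi&-\nu_0\xi^2&Ri\xi\\ 0&\frac{R\bar\theta}{c_v}i\xi&-k_0\xi^2\end{pmatrix}. \] Let $-\delta(\xi)$ be an eigenvalue of $A(\xi)$ (defined for $|\xi|$ large) with $\lim_{|\xi|\to\infty}\delta(\xi)=\omega_0:=R\bar\theta/\nu_0$. Then, for $\xi\neq0$, the vector $\left(1,\frac{i\delta(\xi)}{\bar\rho\xi},d_\delta(\xi)\right)$, where \[ d_\delta(\xi)=-\frac{\delta(\xi)^2-\nu_0\xi^2\delta(\xi)+R\bar\theta\xi^2}{R\bar\rho\xi^2}, \] is an eigenvector of $A(\xi)$ for the eigenvalue $-\delta(\xi)$, and for $|\xi|$ sufficiently large $|d_\delta(\xi)|\le C/|\xi|^2$ for some positive constant $C$.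
   Context: Such an eigenvalue branch $-\delta(\xi)$ exists for $|\xi|$ sufficiently large. *)

theory Defs
  imports "HOL-Analysis.Analysis" "Jordan_Normal_Form.Char_Poly"
begin

definition Amat :: "real \<Rightarrow> real \<Rightarrow> real \<Rightarrow> real \<Rightarrow> real \<Rightarrow> real \<Rightarrow> real \<Rightarrow> complex mat" where
  "Amat rho theta R cv nu0 k0 xi = mat_of_rows_list 3
     [[0, of_real rho * \<i> * of_real xi, 0],
      [of_real (R * theta / rho) * \<i> * of_real xi, - of_real (nu0 * xi^2), of_real R * \<i> * of_real xi],
      [0, of_real (R * theta / cv) * \<i> * of_real xi, - of_real (k0 * xi^2)]]"

definition d_delta :: "real \<Rightarrow> real \<Rightarrow> real \<Rightarrow> real \<Rightarrow> complex \<Rightarrow> real \<Rightarrow> complex" where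
  "d_delta rho theta R nu0 \<delta> xi =
     - ((\<delta>^2 - of_real (nu0 * xi^2) * \<delta> + of_real (R * theta * xi^2)) / of_real (R * rho * xi^2))"

end

theory Submission
  imports Defs
begin

text \<open>For \<open>\<xi> \<noteq> 0\<close> the first two rows of \<open>A(\<xi>) v = -\<delta> v\<close> express \<open>v\<^sub>1\<close> and \<open>v\<^sub>2\<close>
  through \<open>v\<^sub>0\<close>, so every eigenvector has \<open>v\<^sub>0 \<noteq> 0\<close> and, normalised to \<open>v\<^sub>0 = 1\<close>, is the
  vector of the theorem. Its third row then reads \<open>d\<^sub>\<delta>(\<xi>) (k\<^sub>0\<xi>\<^sup>2 - \<delta>) = -K \<delta>\<close> with
  \<open>K = R\<theta>/(c\<^sub>v\<rho>)\<close>. Since \<open>\<delta>\<close> converges, it is eventually bounded by some \<open>B\<close>, and once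
  \<open>k\<^sub>0\<xi>\<^sup>2 \<ge> 2B\<close> we get \<open>|d\<^sub>\<delta>(\<xi>)| \<le> 2KB/(k\<^sub>0\<xi>\<^sup>2)\<close>.\<close>

lemma all_less_3_iff: "(\<forall>i<(3::nat). P i) \<longleftrightarrow> P 0 \<and> P 1 \<and> P 2"
  by (auto simp: numeral_3_eq_3 numeral_2_eq_2 less_Suc_eq)

lemma Amat_carrier: "Amat rho theta R cv nu0 k0 xi \<in> carrier_mat 3 3"
  unfolding Amat_def mat_of_rows_list_def carrier_mat_def by simp

lemma Amat_mult_vec_eq_smult_iff:
  fixes v :: "complex vec"
  assumes "v \<in> carrier_vec 3"
  shows "Amat rho theta R cv nu0 k0 xi *\<^sub>v v = l \<cdot>\<^sub>v v \<longleftrightarrow>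
    of_real rho * \<i> * of_real xi * v$1 = l * v$0 \<and>
    of_real (R * theta / rho) * \<i> * of_real xi * v$0 - of_real (nu0 * xi^2) * v$1
      + of_real R * \<i> * of_real xi * v$2 = l * v$1 \<and>
    of_real (R * theta / cv) * \<i> * of_real xi * v$1 - of_real (k0 * xi^2) * v$2 = l * v$2"
proof -
  have "Amat rho theta R cv nu0 k0 xi *\<^sub>v v = l \<cdot>\<^sub>v v \<longleftrightarrow>
      (\<forall>i<3. (Amat rho theta R cv nu0 k0 xi *\<^sub>v v) $ i = (l \<cdot>\<^sub>v v) $ i)"
    using Amat_carrier[of rho theta R cv nu0 k0 xi] assms by (auto simp: vec_eq_iff)
  then show ?thesis
    using assms unfolding all_less_3_iff
    by (simp add: Amat_def mat_of_rows_list_def scalar_prod_def numeral_3_eq_3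
        numeral_2_eq_2 algebra_simps)
qed

lemma vec_eq_of_list_3:
  fixes v :: "'a vec"
  assumes "v \<in> carrier_vec 3" "v$0 = a" "v$1 = b" "v$2 = c"
  shows "v = vec_of_list [a, b, c]"
  using assms by (intro eq_vecI) (auto simp: less_Suc_eq numeral_3_eq_3 numeral_2_eq_2)

lemma Amat_eigenvector_first_entry_nonzero:
  fixes v :: "complex vec"
  assumes "rho \<noteq> 0" "R \<noteq> 0" "xi \<noteq> 0"
    and "eigenvector (Amat rho theta R cv nu0 k0 xi) v l"
  shows "v$0 \<noteq> 0"
proof
  assume v0: "v$0 = 0"
  have v: "v \<in> carrier_vec 3" "v \<noteq> 0\<^sub>v 3"
    "Amat rho theta R cv nu0 k0 xi *\<^sub>v v = l \<cdot>\<^sub>v v"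
    using assms(4) Amat_carrier[of rho theta R cv nu0 k0 xi] unfolding eigenvector_def by auto
  note rows = v(3)[unfolded Amat_mult_vec_eq_smult_iff[OF v(1)]]
  from rows v0 assms(1,3) have v1: "v$1 = 0" by simp
  from rows v0 v1 assms(2,3) have v2: "v$2 = 0" by simp
  have "v = 0\<^sub>v 3"
    using v(1) v0 v1 v2 by (intro eq_vecI) (auto simp: less_Suc_eq numeral_3_eq_3 numeral_2_eq_2)
  with v(2) show False ..
qed

lemma Amat_eigenvector_normalized:
  assumes "rho \<noteq> 0" "R \<noteq> 0" "xi \<noteq> 0"
    and "eigenvalue (Amat rho theta R cv nu0 k0 xi) (- dl)"
  shows "eigenvector (Amat rho theta R cv nu0 k0 xi)
    (vec_of_list [1, \<i> * dl / of_real (rho * xi), d_delta rho theta R nu0 dl xi]) (- dl)"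
proof -
  let ?A = "Amat rho theta R cv nu0 k0 xi"
  obtain w where w: "eigenvector ?A w (- dl)"
    using assms(4) unfolding eigenvalue_def by blast
  have wc: "w \<in> carrier_vec 3" and wA: "?A *\<^sub>v w = (- dl) \<cdot>\<^sub>v w"
    using w Amat_carrier[of rho theta R cv nu0 k0 xi] unfolding eigenvector_def by auto
  have w0: "w$0 \<noteq> 0"
    using Amat_eigenvector_first_entry_nonzero[OF assms(1-3) w] .
  define u where "u = (1 / w$0) \<cdot>\<^sub>v w"
  have uc: "u \<in> carrier_vec 3" using wc by (simp add: u_def)
  have uA: "?A *\<^sub>v u = (- dl) \<cdot>\<^sub>v u"
    unfolding u_def mult_mat_vec[OF Amat_carrier[of rho theta R cv nu0 k0 xi] wc] wA by (auto simp: vec_eq_iff)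
  have u0: "u$0 = 1" using wc w0 by (simp add: u_def)
  note rows = uA[unfolded Amat_mult_vec_eq_smult_iff[OF uc]]
  have nz: "complex_of_real rho \<noteq> 0" "complex_of_real R \<noteq> 0" "complex_of_real xi \<noteq> 0"
    using assms(1-3) by auto
  have "u$1 = - dl / (of_real rho * \<i> * of_real xi)"
    using rows u0 nz by (simp add: field_simps)
  also have "\<dots> = \<i> * dl / of_real (rho * xi)"
    using nz by (simp add: field_simps)
  finally have u1: "u$1 = \<i> * dl / of_real (rho * xi)" .
  have "u$2 = ((nu0 * xi^2 - dl) * u$1 - of_real (R * theta / rho) * \<i> * of_real xi)
      / (of_real R * \<i> * of_real xi)"
    using rows u0 nz by (simp add: field_simps)
  also have "\<dots> = d_delta rho theta R nu0 dl xi"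
    unfolding u1 d_delta_def using nz by (simp add: field_simps power2_eq_square)
  finally have u2: "u$2 = d_delta rho theta R nu0 dl xi" .
  have "u \<noteq> 0\<^sub>v 3"
    using u0 by (metis index_zero_vec(1) zero_less_numeral zero_neq_one)
  then show ?thesis
    using uA uc Amat_carrier[of rho theta R cv nu0 k0 xi] vec_eq_of_list_3[OF uc u0 u1 u2]
    unfolding eigenvector_def by simp
qed

lemma d_delta_mult_eq:
  assumes "rho \<noteq> 0" "cv \<noteq> 0" "xi \<noteq> 0"
    and "eigenvector (Amat rho theta R cv nu0 k0 xi)
      (vec_of_list [1, \<i> * dl / of_real (rho * xi), d_delta rho theta R nu0 dl xi]) (- dl)"
  shows "d_delta rho theta R nu0 dl xi * (of_real (k0 * xi^2) - dl)
    = - of_real (R * theta / (cv * rho)) * dl"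
proof -
  let ?d = "d_delta rho theta R nu0 dl xi"
  have row3: "of_real (R * theta / cv) * \<i> * of_real xi * (\<i> * dl / of_real (rho * xi))
      - of_real (k0 * xi^2) * ?d = - dl * ?d"
    using assms(4) Amat_mult_vec_eq_smult_iff[of _ rho theta R cv nu0 k0 xi]
    unfolding eigenvector_def by (simp add: numeral_3_eq_3 numeral_2_eq_2)
  have coupling: "of_real (R * theta / cv) * \<i> * of_real xi * (\<i> * dl / of_real (rho * xi))
      = - of_real (R * theta / (cv * rho)) * dl"
    using assms(1-3) by (simp add: field_simps power2_eq_square[symmetric])
  show ?thesis
    using row3[unfolded coupling]
    by (simp add: algebra_simps del: of_real_divide of_real_mult of_real_power)
qed

lemma norm_mult_le_of_mult_sub_eq:
  fixes z c \<delta> :: complex and a :: real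
  assumes "2 * cmod \<delta> \<le> a" "z * (of_real a - \<delta>) = c * \<delta>"
  shows "cmod z * a \<le> 2 * (cmod c * cmod \<delta>)"
proof -
  have "a / 2 \<le> cmod (of_real a - \<delta>)"
    using norm_triangle_ineq2[of "of_real a" \<delta>] assms(1) by simp
  then have "cmod z * (a / 2) \<le> cmod z * cmod (of_real a - \<delta>)"
    by (rule mult_left_mono) simp
  also have "\<dots> = cmod c * cmod \<delta>"
    using arg_cong[OF assms(2), of cmod] by (simp add: norm_mult)
  finally show ?thesis by simp
qed

lemma d_delta_norm_le:
  assumes "rho \<noteq> 0" "R \<noteq> 0" "cv \<noteq> 0" "xi \<noteq> 0"
    and "eigenvalue (Amat rho theta R cv nu0 k0 xi) (- dl)"
    and "2 * cmod dl \<le> k0 * xi^2"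
  shows "cmod (d_delta rho theta R nu0 dl xi) * (k0 * xi^2)
    \<le> 2 * (\<bar>R * theta / (cv * rho)\<bar> * cmod dl)"
proof -
  have "d_delta rho theta R nu0 dl xi * (of_real (k0 * xi^2) - dl)
      = - of_real (R * theta / (cv * rho)) * dl"
    using d_delta_mult_eq[OF assms(1,3,4) Amat_eigenvector_normalized[OF assms(1,2,4,5)]] .
  from assms(6) this show ?thesis
    by (rule norm_mult_le_of_mult_sub_eq[THEN order_trans])
      (simp del: of_real_divide of_real_mult)
qed

lemma d_delta_eventually_le:
  fixes \<delta> :: "real \<Rightarrow> complex"
  assumes "rho \<noteq> 0" "R \<noteq> 0" "cv \<noteq> 0" "k0 > 0"
    and "\<forall>\<^sub>F xi in at_infinity. eigenvalue (Amat rho theta R cv nu0 k0 xi) (- \<delta> xi)"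
    and "\<forall>\<^sub>F xi in at_infinity. cmod (\<delta> xi) \<le> B"
  shows "\<forall>\<^sub>F xi in at_infinity. cmod (d_delta rho theta R nu0 (\<delta> xi) xi)
    \<le> (2 * \<bar>R * theta / (cv * rho)\<bar> * B / k0) / xi^2"
proof -
  let ?K = "\<bar>R * theta / (cv * rho)\<bar>"
  have "\<forall>\<^sub>F xi in at_infinity. max 1 (2 * B / k0) \<le> norm (xi::real)"
    unfolding eventually_at_infinity by blast
  with assms(5,6) show ?thesis
  proof eventually_elim
    case (elim xi)
    then have "1 \<le> \<bar>xi\<bar>" "2 * B / k0 \<le> \<bar>xi\<bar>" by auto
    then have "xi \<noteq> 0" by auto
    have "\<bar>xi\<bar> \<le> xi^2"
      using mult_right_mono[OF \<open>1 \<le> \<bar>xi\<bar>\<close> abs_ge_zero[of xi]]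
      by (simp add: power2_eq_square abs_mult_self_eq)
    have "2 * B \<le> k0 * \<bar>xi\<bar>"
      using \<open>2 * B / k0 \<le> \<bar>xi\<bar>\<close> assms(4) by (simp add: field_simps)
    also have "\<dots> \<le> k0 * xi^2"
      using \<open>\<bar>xi\<bar> \<le> xi^2\<close> assms(4) by simp
    finally have "2 * cmod (\<delta> xi) \<le> k0 * xi^2"
      using elim(2) by simp
    then have "cmod (d_delta rho theta R nu0 (\<delta> xi) xi) * (k0 * xi^2) \<le> 2 * (?K * cmod (\<delta> xi))"
      using d_delta_norm_le assms(1-3) \<open>xi \<noteq> 0\<close> elim(1) by blast
    also have "\<dots> \<le> 2 * ?K * B"
      using mult_left_mono[OF elim(2), of ?K] by simp
    finally have "cmod (d_delta rho theta R nu0 (\<delta> xi) xi) * (k0 * xi^2) \<le> 2 * ?K * B" .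
    moreover have "0 < k0 * xi^2"
      using assms(4) \<open>xi \<noteq> 0\<close> by simp
    ultimately show ?case
      by (simp only: divide_divide_eq_left pos_le_divide_eq)
  qed
qed

theorem lemma2p7:
  fixes rho theta R cv nu0 k0 M :: real and \<delta> :: "real \<Rightarrow> complex"
  assumes "rho > 0" "theta > 0" "R > 0" "cv > 0" "nu0 > 0" "k0 > 0"
    and eig: "\<forall>xi. M \<le> \<bar>xi\<bar> \<longrightarrow> eigenvalue (Amat rho theta R cv nu0 k0 xi) (- \<delta> xi)"
    and lim: "(\<delta> \<longlongrightarrow> of_real (R * theta / nu0)) at_infinity"
  shows "(\<forall>xi. M \<le> \<bar>xi\<bar> \<and> xi \<noteq> 0 \<longrightarrow>
            eigenvector (Amat rho theta R cv nu0 k0 xi)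
              (vec_of_list [1, \<i> * \<delta> xi / of_real (rho * xi), d_delta rho theta R nu0 (\<delta> xi) xi])
              (- \<delta> xi))
         \<and> (\<exists>C>0. \<forall>\<^sub>F xi in at_infinity. cmod (d_delta rho theta R nu0 (\<delta> xi) xi) \<le> C / xi^2)"
  (is "?eigvec \<and> _")
proof
  show ?eigvec
    using Amat_eigenvector_normalized eig assms(1,3) by simp
  let ?B = "R * theta / nu0 + 1" and ?K = "\<bar>R * theta / (cv * rho)\<bar>"
  have "((\<lambda>xi. cmod (\<delta> xi)) \<longlongrightarrow> R * theta / nu0) at_infinity"
    using tendsto_norm[OF lim, unfolded norm_of_real] assms(2,3,5) by simp
  then have bounded: "\<forall>\<^sub>F xi in at_infinity. cmod (\<delta> xi) \<le> ?B"
    by (rule eventually_mono[OF order_tendstoD(2)[of _ _ _ ?B]]) auto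
  have "\<forall>\<^sub>F xi in at_infinity. eigenvalue (Amat rho theta R cv nu0 k0 xi) (- \<delta> xi)"
    using eig unfolding eventually_at_infinity by auto
  from d_delta_eventually_le[OF _ _ _ assms(6) this bounded] assms(1,3,4)
  have "\<forall>\<^sub>F xi in at_infinity.
      cmod (d_delta rho theta R nu0 (\<delta> xi) xi) \<le> (2 * ?K * ?B / k0) / xi^2"
    by simp
  moreover have "2 * ?K * ?B / k0 > 0"
    using assms by (simp add: add_pos_pos)
  ultimately show "\<exists>C>0. \<forall>\<^sub>F xi in at_infinity. cmod (d_delta rho theta R nu0 (\<delta> xi) xi) \<le> C / xi^2"
    by blast
qed

end
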